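(* For each integer $l\ge1$, the sequence $X(l)=(a_j)_{j\ge1}$ with $a_j=\nu_2(A_{l,l+j-1})$ is $s$-simple with $s=2^{1+\nu_2(l)}$.
   Context: $A_{l,m}=\frac{l!\,m!}{2^{m-l}}\sum_{k=l}^{m}2^{k}\binom{2m-2k}{m-k}\binom{m+k}{k}\binom{k}{l}$ for $0\le l\le m$; $\nu_2$ is the $2$-adic valuation. A sequence $(a_j)_{j\ge1}$ has block structure with block length $s\ge2$ if for every $t\ge0$, $a_{st+1}=a_{st+2}=\cdots=a_{s(t+1)}$; it is called $s$-simple if $s$ is the largest block length for which this holds. *)

theory Defs
  imports Main "HOL-Computational_Algebra.Computational_Algebra"
begin

text \<open>A_{l,m} as a rational number (the paper's formula, division by 2^(m-l) exact in Q).\<close>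
definition A :: "nat \<Rightarrow> nat \<Rightarrow> rat" where
  "A l m = of_nat (fact l * fact m) / 2 ^ (m - l) *
     (\<Sum>k=l..m. 2 ^ k * of_nat ((2*m - 2*k) choose (m - k)) * of_nat ((m + k) choose k)
                  * of_nat (k choose l))"

definition nu2 :: "rat \<Rightarrow> int" where
  "nu2 x = (case quotient_of x of (p, q) \<Rightarrow>
              int (multiplicity (2::int) p) - int (multiplicity (2::int) q))"

definition block_structure :: "(nat \<Rightarrow> 'a) \<Rightarrow> nat \<Rightarrow> bool" where
  "block_structure a s \<longleftrightarrow> s \<ge> 2 \<and>
     (\<forall>t. \<forall>i \<in> {s*t+1..s*(t+1)}. a i = a (s*t+1))"

definition simple_seq :: "(nat \<Rightarrow> 'a) \<Rightarrow> nat \<Rightarrow> bool" where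
  "simple_seq a s \<longleftrightarrow> block_structure a s \<and> (\<forall>s'. block_structure a s' \<longrightarrow> s' \<le> s)"

end

theory Submission
  imports Defs
begin

text \<open>
  The proof first evaluates $A_{l,m}$ in closed form: writing $m = n + l$,
  $A_{l,m} = 2^l (n+1)(n+2)\cdots(n+2l) \cdot W$ with $W$ an odd integer. Therefore
  $a_i = l + \nu_2(i(i+1)\cdots(i+2l-1))$, and
  $a_{i+1} - a_i = \nu_2(i+2l) - \nu_2(i)$.
  If $s \nmid i$ then $\nu_2(i) < \nu_2(2l)$, so $\nu_2(i+2l) = \nu_2(i)$ and $a_{i+1} = a_i$:
  the sequence is constant on each block $\{st+1, \ldots, s(t+1)\}$.
  For $i = s$ both $s$ and $2l$ have valuation $\nu_2(2l)$, so $\nu_2(s+2l) > \nu_2(s)$ and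
  $a_{s+1} \ne a_s$, which rules out every block length larger than $s$.
\<close>

text \<open>The odd double factorial $1 \cdot 3 \cdots (2i-1)$; it is the odd part of $(2i)!/i!$.\<close>
definition odd_double_fact :: "nat \<Rightarrow> nat" where
  "odd_double_fact i = (\<Prod>t<i. 2*t + 1)"

lemma odd_double_fact_odd: "odd (odd_double_fact i)"
  by (induction i) (auto simp: odd_double_fact_def)

lemma fact_double_nat: "fact (2*i) = (2::nat)^i * fact i * odd_double_fact i"
proof (induction i)
  case 0 then show ?case by (simp add: odd_double_fact_def)
next
  case (Suc i)
  have "fact (2*Suc i) = (2*i+2) * ((2*i+1) * (fact (2*i)::nat))"
    by (simp add: fact_Suc)
  with Suc show ?case by (simp add: odd_double_fact_def fact_Suc algebra_simps)
qed

lemma central_binomial_rat: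
  "of_nat ((2*i) choose i) = (2^i * of_nat (odd_double_fact i) / fact i :: rat)"
proof -
  have "of_nat ((2*i) choose i) = (fact (2*i) / (fact i * fact i) :: rat)"
    by (simp add: binomial_fact mult_2)
  also have "\<dots> = 2^i * of_nat (odd_double_fact i) / fact i"
    using arg_cong[OF fact_double_nat[of i], of "of_nat :: nat \<Rightarrow> rat"] by (simp add: field_simps)
  finally show ?thesis .
qed

text \<open>The summand of $A_{l,n+l}$ with index $k = j + l$, together with the prefactor $l!\,(n+l)!$
  and multiplied by $n!$, equals $2^{n+l} (n+2l)!$ times the $j$-th term of the cofactor below.\<close>
lemma summand_identity:
  assumes "j \<le> n"
  shows "fact l * fact (n+l) * 2^(j+l) * ((2*(n-j)) choose (n-j)) * ((n+2*l+j) choose (j+l))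
           * ((j+l) choose l) * fact n
       = (2::nat)^(n+l) * fact (n+2*l)
           * (odd_double_fact (n-j) * (n choose j) * ((n+2*l+j) choose j) * fact j)"
proof -
  define i where "i = n - j"
  have n: "n = i + j" using assms by (simp add: i_def)
  have "(of_nat (fact l * fact (n+l) * 2^(j+l) * ((2*i) choose i) * ((n+2*l+j) choose (j+l))
           * ((j+l) choose l) * fact n) :: rat)
       = of_nat (2^(n+l) * fact (n+2*l)
           * (odd_double_fact i * (n choose j) * ((n+2*l+j) choose j) * fact j))"
    unfolding of_nat_mult of_nat_power of_nat_fact central_binomial_rat
    by (simp add: binomial_fact n field_simps power_add)
  then show ?thesis unfolding i_def by (simp only: of_nat_eq_iff)
qed

text \<open>The cofactor of $2^l (n+1)(n+2)\cdots(n+2l)$ in $A_{l,n+l}$, see the closed form below.\<close>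
definition A_cofactor :: "nat \<Rightarrow> nat \<Rightarrow> nat" where
  "A_cofactor l n = (\<Sum>j=0..n. odd_double_fact (n-j) * (n choose j) * ((n+2*l+j) choose j) * fact j)"

lemma fact_add_pochhammer: "fact (n + k) = fact n * pochhammer (n+1) k"
  using pochhammer_product'[of "1::nat" n k] by (simp add: pochhammer_fact add.commute)

lemma A_closed_form: "A l (n+l) = of_nat (2^l * pochhammer (n+1) (2*l) * A_cofactor l n)"
proof -
  define S where "S = (\<Sum>k=l..n+l. 2^k * ((2*(n+l) - 2*k) choose (n+l-k)) * ((n+l+k) choose k)
                          * (k choose l))"
  have A_eq: "A l (n+l) = of_nat (fact l * fact (n+l) * S) / 2^n"
    unfolding A_def S_def by (simp add: of_nat_sum algebra_simps)
  define f where "f k = fact l * fact (n+l) * 2^k * ((2*(n+l) - 2*k) choose (n+l-k))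
                          * ((n+l+k) choose k) * (k choose l) * fact n" for k
  have "fact n * (fact l * fact (n+l) * S) = (\<Sum>k=0+l..n+l. f k)"
    unfolding S_def f_def by (simp add: sum_distrib_left sum_distrib_right algebra_simps)
  also have "\<dots> = (\<Sum>j=0..n. f (j+l))"
    by (rule sum.shift_bounds_cl_nat_ivl)
  also have "\<dots> = (\<Sum>j=0..n. 2^(n+l) * fact (n+2*l)
           * (odd_double_fact (n-j) * (n choose j) * ((n+2*l+j) choose j) * fact j))"
  proof (intro sum.cong refl)
    fix j assume "j \<in> {0..n}"
    then have index_eqs: "2*(n+l) - 2*(j+l) = 2*(n-j)" "n+l-(j+l) = n-j" "n+l+(j+l) = n+2*l+j"
      by auto
    show "f (j+l) = 2^(n+l) * fact (n+2*l)
           * (odd_double_fact (n-j) * (n choose j) * ((n+2*l+j) choose j) * fact j)"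
      unfolding f_def index_eqs using \<open>j \<in> {0..n}\<close> by (intro summand_identity) simp
  qed
  also have "\<dots> = fact n * (2^n * (2^l * pochhammer (n+1) (2*l) * A_cofactor l n))"
    unfolding A_cofactor_def fact_add_pochhammer by (simp add: sum_distrib_left power_add algebra_simps)
  finally have "fact l * fact (n+l) * S = 2^n * (2^l * pochhammer (n+1) (2*l) * A_cofactor l n)"
    by simp
  then show ?thesis unfolding A_eq by simp
qed

text \<open>The cofactor is odd: its $j = 0$ term is odd, the $j = 1$ term contains $n(n+2l+1)$, which is
  even, and every later term contains $j!$.\<close>
lemma A_cofactor_odd: "odd (A_cofactor l n)"
proof -
  let ?w = "\<lambda>j. odd_double_fact (n-j) * (n choose j) * ((n+2*l+j) choose j) * fact j"
  have even_terms: "even (?w j)" if "j \<in> {1..n}" for j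
  proof (cases "j = 1")
    case True
    have "even (n * (n + 2*l + 1))" by auto
    then show ?thesis using True by simp
  next
    case False
    then have "2 dvd (fact j :: nat)" using that by (intro dvd_fact) auto
    then show ?thesis by simp
  qed
  have "A_cofactor l n = odd_double_fact n + (\<Sum>j=1..n. ?w j)"
    unfolding A_cofactor_def by (subst sum.atLeast_Suc_atMost) auto
  moreover have "even (\<Sum>j=1..n. ?w j)" by (intro dvd_sum even_terms)
  ultimately show ?thesis using odd_double_fact_odd[of n] by simp
qed

lemma multiplicity_int_of_nat: "multiplicity (2::int) (int x) = multiplicity (2::nat) x"
proof (cases "x = 0")
  case False
  have "k \<le> multiplicity (2::int) (int x) \<longleftrightarrow> k \<le> multiplicity (2::nat) x" for k
    using False int_dvd_int_iff[of "2^k" x] by (simp flip: power_dvd_iff_le_multiplicity)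
  then show ?thesis by (meson le_antisym order_refl)
qed simp

lemma nu2_of_nat: "nu2 (of_nat x) = int (multiplicity (2::nat) x)"
  unfolding nu2_def by (simp add: multiplicity_int_of_nat)

lemma nu2_A:
  assumes "i \<ge> 1"
  shows "nu2 (A l (l + i - 1)) = int l + int (multiplicity (2::nat) (pochhammer i (2*l)))"
proof -
  have "A l (l + i - 1) = of_nat (2^l * pochhammer i (2*l) * A_cofactor l (i - 1))"
    using A_closed_form[of l "i - 1"] assms by (simp add: add.commute)
  moreover have "multiplicity 2 (2^l * pochhammer i (2*l) * A_cofactor l (i - 1))
               = l + multiplicity (2::nat) (pochhammer i (2*l))"
    using assms A_cofactor_odd[of l "i - 1"]
    by (simp add: pochhammer_pos prime_elem_multiplicity_mult_distrib
                  not_dvd_imp_multiplicity_0 odd_pos)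
  ultimately show ?thesis by (simp only: nu2_of_nat of_nat_add)
qed

lemma pochhammer_shift: "pochhammer (i + 1) k * i = pochhammer i k * (i + k :: nat)"
  using pochhammer_rec[of i k] pochhammer_Suc[of i k] by (simp add: mult.commute)

text \<open>Passing from $i$ to $i+1$ removes the factor $i$ and adds $i + 2l$, so consecutive terms of the
  sequence differ by $\nu_2(i+2l) - \nu_2(i)$.\<close>
lemma nu2_A_step:
  assumes "i \<ge> 1"
  shows "nu2 (A l (l + Suc i - 1)) + int (multiplicity (2::nat) i)
       = nu2 (A l (l + i - 1)) + int (multiplicity (2::nat) (i + 2*l))"
proof -
  have "multiplicity (2::nat) (pochhammer (i + 1) (2*l) * i)
      = multiplicity (2::nat) (pochhammer i (2*l) * (i + 2*l))"
    by (simp only: pochhammer_shift)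
  then show ?thesis using assms nu2_A[of i l] nu2_A[of "i + 1" l]
    by (simp add: pochhammer_pos prime_elem_multiplicity_mult_distrib)
qed

lemma block_structureI:
  assumes "s \<ge> 2" and step: "\<And>i. i \<ge> 1 \<Longrightarrow> \<not> s dvd i \<Longrightarrow> a (Suc i) = a i"
  shows "block_structure a s"
  unfolding block_structure_def
proof (intro conjI allI ballI)
  fix t i assume i: "i \<in> {s*t+1..s*(t+1)}"
  have block_const: "a (s*t + 1 + d) = a (s*t + 1)" if "d < s" for d
    using that
  proof (induction d)
    case (Suc d)
    have "\<not> s dvd s*t + 1 + d"
    proof
      assume "s dvd s*t + 1 + d"
      then have "s dvd 1 + d" by (metis add.assoc dvd_add_right_iff dvd_triv_left)
      then show False using Suc.prems by (auto dest: dvd_imp_le)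
    qed
    then have "a (s*t + 1 + Suc d) = a (s*t + 1 + d)"
      using step[of "s*t + 1 + d"] by simp
    also have "\<dots> = a (s*t + 1)" using Suc by simp
    finally show ?case .
  qed simp
  define d where "d = i - (s*t + 1)"
  have "d < s" and i_eq: "i = s*t + 1 + d" using i by (auto simp: d_def)
  show "a i = a (s*t + 1)" unfolding i_eq by (rule block_const[OF \<open>d < s\<close>])
qed (fact \<open>s \<ge> 2\<close>)

text \<open>If the sequence changes between positions $s$ and $s+1$, no block length exceeds $s$, since
  otherwise $1$, $s$ and $s+1$ would lie in the first block.\<close>
lemma block_length_le:
  assumes "block_structure a s'" and "1 \<le> s" and "a (Suc s) \<noteq> a s"
  shows "s' \<le> s"
proof (rule ccontr)
  assume "\<not> s' \<le> s"
  have first_block: "a i = a 1" if "i \<in> {1..s'}" for i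
    using that assms(1) unfolding block_structure_def by (metis mult_0_right add_0 mult_1_right)
  have "a (Suc s) = a 1" by (rule first_block) (use \<open>\<not> s' \<le> s\<close> in simp)
  moreover have "a s = a 1" by (rule first_block) (use \<open>\<not> s' \<le> s\<close> assms(2) in simp)
  ultimately show False using assms(3) by simp
qed

lemma simple_seqI:
  assumes "block_structure a s" and "a (Suc s) \<noteq> a s"
  shows "simple_seq a s"
proof -
  have "1 \<le> s" using assms(1) unfolding block_structure_def by simp
  then show ?thesis unfolding simple_seq_def using assms block_length_le by blast
qed

lemma multiplicity_add_of_not_dvd:
  fixes i d :: nat
  assumes "\<not> 2 ^ multiplicity 2 d dvd i" and "d \<noteq> 0"
  shows "multiplicity 2 (i + d) = multiplicity 2 i"
proof -
  have "i \<noteq> 0" using assms(1) by (metis dvd_0_right)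
  then have "multiplicity 2 i < multiplicity 2 d"
    using assms(1) by (simp add: power_dvd_iff_le_multiplicity)
  then show ?thesis using \<open>i \<noteq> 0\<close> assms(2) by (rule multiplicity_sum_lt)
qed

lemma multiplicity_add_same:
  fixes x y :: nat
  assumes "multiplicity 2 x = multiplicity 2 y" and "x \<noteq> 0" and "y \<noteq> 0"
  shows "multiplicity 2 x < multiplicity 2 (x + y)"
proof -
  obtain x' where x': "x = 2 ^ multiplicity 2 x * x'" "odd x'"
    using multiplicity_decompose'[of x "2::nat"] assms(2) by auto
  obtain y' where y': "y = 2 ^ multiplicity 2 y * y'" "odd y'"
    using multiplicity_decompose'[of y "2::nat"] assms(3) by auto
  have "even (x' + y')" using x'(2) y'(2) by simp
  then obtain c where c: "x' + y' = 2 * c" by blast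
  have "x + y = 2 ^ multiplicity 2 x * (x' + y')"
    using x'(1) y'(1) assms(1) by (metis distrib_left)
  then have "x + y = 2 ^ Suc (multiplicity 2 x) * c" by (simp add: c)
  then have "2 ^ Suc (multiplicity 2 x) dvd x + y" by simp
  then have "Suc (multiplicity 2 x) \<le> multiplicity 2 (x + y)"
    using assms(2) by (intro multiplicity_geI) auto
  then show ?thesis by simp
qed

theorem mainTheorem11:
  fixes l :: nat
  assumes "l \<ge> 1"
  shows "simple_seq (\<lambda>j. nu2 (A l (l + j - 1))) (2 ^ (1 + multiplicity (2::nat) l))"
proof -
  define a where "a = (\<lambda>j. nu2 (A l (l + j - 1)))"
  define e where "e = multiplicity (2::nat) (2*l)"
  have e: "1 + multiplicity (2::nat) l = e"
    unfolding e_def using multiplicity_times_same[where p = "2::nat" and x = l] assms by simp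
  have step: "a (Suc i) + int (multiplicity 2 i) = a i + int (multiplicity 2 (i + 2*l))"
    if "i \<ge> 1" for i
    unfolding a_def using nu2_A_step[OF that] .
  have "block_structure a (2 ^ e)"
  proof (rule block_structureI)
    show "2 \<le> (2::nat) ^ e" unfolding e[symmetric] by simp
    fix i :: nat assume "1 \<le> i" and "\<not> 2 ^ e dvd i"
    then have "multiplicity 2 (i + 2*l) = multiplicity 2 i"
      using assms unfolding e_def by (intro multiplicity_add_of_not_dvd) auto
    then show "a (Suc i) = a i" using step[OF \<open>1 \<le> i\<close>] by simp
  qed
  moreover have "a (Suc (2 ^ e)) \<noteq> a (2 ^ e)"
  proof -
    have "multiplicity 2 ((2::nat) ^ e) < multiplicity 2 (2 ^ e + 2*l)"
      using assms by (intro multiplicity_add_same) (auto simp: e_def)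
    then show ?thesis using step[of "2 ^ e"] by simp
  qed
  ultimately show ?thesis unfolding a_def e by (rule simple_seqI)
qed

end
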